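(* In the noiseless discrete channel setting described in the context, suppose that for every fixed $\epsilon>0$ and every sequence of sample sizes $n=n_N$ with $n\geq(1+\epsilon)n^*$, it holds that $\lim_{N\to\infty}H(\theta\mid Y^n,X^n)/H(\theta)=0$. Then: (1) $\displaystyle\lim_{N\to\infty}\frac{D(P_{n^*}\|Q_{n^*})}{H(\theta)}=0$; and (2) for every fixed $\epsilon>0$ and every sequence $n=n_N$ with $n\leq(1-\epsilon)n^*$, $$\lim_{N\to\infty}\frac{H(Y_{n+1}\mid Y^n,X^{n+1})}{H(Y)}=1.$$
   Context: Setting. For each $N\in\mathbb N$: $\Theta=\Theta_N$ is a finite subset of the unit sphere of $\mathbb R^N$ of cardinality $M=M_N$, with $M_N\to\infty$ and $\langle\theta,\theta'\rangle\ge 0$ for all $\theta,\theta'\in\Theta$; $P_\Theta$ is the uniform distribution on $\Theta$; $\mathcal D=\mathcal D_N$ is a distribution on $\mathbb R^{L}$; $g=g_N:\mathbb R^L\times\mathbb R^N\to\mathcal Y$ with $\mathcal Y$ finite of cardinality independent of $N$. One draws $\theta\sim P_\Theta$, independently $X_1,X_2,\dots$ i.i.d. from $\mathcal D$, and sets $Y_i=g(X_i,\theta)$; $Y^m=(Y_i)_{i\le m}$, $X^m=(X_i)_{i\le m}$. $H$ denotes Shannon entropy and $D$ Kullback–Leibler divergence (natural log). $Y$ denotes $g(X,\theta)$ with $X\sim\mathcal D$, $\theta\sim P_\Theta$ independent; $n^*=\lfloor H(\theta)/H(Y)\rfloor$. For $m\in\mathbb N$, $P_m$ is the law of $(Y^m,X^m)$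 under the model, and $Q_m$ is the "null" law under which $X_1,\dots,X_m$ are i.i.d. from $\mathcal D$ and, independently of them, $Y_1,\dots,Y_m$ are i.i.d. with the law of $Y$. *)

theory Defs
  imports "HOL-Probability.Probability"
begin

definition pmf_entropy :: "'a pmf \<Rightarrow> real" where
  "pmf_entropy p = - (\<Sum>a\<in>set_pmf p. pmf p a * ln (pmf p a))"

definition pmf_cond_entropy :: "('a \<times> 'b) pmf \<Rightarrow> real" where
  "pmf_cond_entropy p =
     - (\<Sum>ab\<in>set_pmf p. pmf p ab * ln (pmf p ab / pmf (map_pmf snd p) (snd ab)))"

text \<open>The model: parameter set Th (theta uniform on Th), covariate law D, link g.\<close>

definition H_theta :: "(nat \<Rightarrow> real) set \<Rightarrow> real" where
  "H_theta Th = pmf_entropy (pmf_of_set Th)"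

text \<open>Law of Y = g(X,theta), X ~ D independent of theta uniform on Th.\<close>
definition law_Y :: "(nat \<Rightarrow> real) set \<Rightarrow> (nat \<Rightarrow> real) measure
    \<Rightarrow> ((nat \<Rightarrow> real) \<Rightarrow> (nat \<Rightarrow> real) \<Rightarrow> 'y) \<Rightarrow> 'y \<Rightarrow> real" where
  "law_Y Th D g y = (\<Sum>\<theta>\<in>Th. measure D {x \<in> space D. g x \<theta> = y}) / real (card Th)"

definition H_Y :: "(nat \<Rightarrow> real) set \<Rightarrow> (nat \<Rightarrow> real) measure
    \<Rightarrow> ((nat \<Rightarrow> real) \<Rightarrow> (nat \<Rightarrow> real) \<Rightarrow> 'y::finite) \<Rightarrow> real" where
  "H_Y Th D g = - (\<Sum>y\<in>UNIV. law_Y Th D g y * ln (law_Y Th D g y))"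

definition nstar :: "(nat \<Rightarrow> real) set \<Rightarrow> (nat \<Rightarrow> real) measure
    \<Rightarrow> ((nat \<Rightarrow> real) \<Rightarrow> (nat \<Rightarrow> real) \<Rightarrow> 'y::finite) \<Rightarrow> nat" where
  "nstar Th D g = nat \<lfloor>H_theta Th / H_Y Th D g\<rfloor>"

definition sample_law :: "(nat \<Rightarrow> real) measure \<Rightarrow> nat \<Rightarrow> (nat \<Rightarrow> nat \<Rightarrow> real) measure" where
  "sample_law D m = PiM {..<m} (\<lambda>_. D)"

definition obs :: "((nat \<Rightarrow> real) \<Rightarrow> (nat \<Rightarrow> real) \<Rightarrow> 'y) \<Rightarrow> (nat \<Rightarrow> nat \<Rightarrow> real)
    \<Rightarrow> (nat \<Rightarrow> real) \<Rightarrow> nat \<Rightarrow> nat \<Rightarrow> 'y" where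
  "obs g x \<theta> m = (\<lambda>i\<in>{..<m}. g (x i) \<theta>)"

text \<open>H(theta | Y^n, X^n) = E_{X^n}[ H(theta | Y^n, X^n = x) ]; given X^n = x the
  pair (theta, Y^n) has law of (theta, obs x theta n) with theta uniform.\<close>
definition H_theta_given :: "(nat \<Rightarrow> real) set \<Rightarrow> (nat \<Rightarrow> real) measure
    \<Rightarrow> ((nat \<Rightarrow> real) \<Rightarrow> (nat \<Rightarrow> real) \<Rightarrow> 'y) \<Rightarrow> nat \<Rightarrow> real" where
  "H_theta_given Th D g n =
     (\<integral>x. pmf_cond_entropy (map_pmf (\<lambda>\<theta>. (\<theta>, obs g x \<theta> n)) (pmf_of_set Th))
        \<partial>sample_law D n)"

text \<open>H(Y_{n+1} | Y^n, X^{n+1}) (indices from 0: Y_{n+1} is g (x n) theta).\<close>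
definition H_next_given :: "(nat \<Rightarrow> real) set \<Rightarrow> (nat \<Rightarrow> real) measure
    \<Rightarrow> ((nat \<Rightarrow> real) \<Rightarrow> (nat \<Rightarrow> real) \<Rightarrow> 'y) \<Rightarrow> nat \<Rightarrow> real" where
  "H_next_given Th D g n =
     (\<integral>x. pmf_cond_entropy (map_pmf (\<lambda>\<theta>. (g (x n) \<theta>, obs g x \<theta> n)) (pmf_of_set Th))
        \<partial>sample_law D (Suc n))"

text \<open>D(P_m || Q_m) = integral of log(dP_m/dQ_m) dP_m, where
  dP_m/dQ_m (y,x) = P(Y^m = y | X^m = x) / prod_i P(Y = y_i).\<close>
definition KL_PQ :: "(nat \<Rightarrow> real) set \<Rightarrow> (nat \<Rightarrow> real) measure
    \<Rightarrow> ((nat \<Rightarrow> real) \<Rightarrow> (nat \<Rightarrow> real) \<Rightarrow> 'y) \<Rightarrow> nat \<Rightarrow> real" where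
  "KL_PQ Th D g m =
     (\<integral>x. (let p = map_pmf (\<lambda>\<theta>. obs g x \<theta> m) (pmf_of_set Th) in
            \<Sum>y\<in>set_pmf p. pmf p y * ln (pmf p y / (\<Prod>i<m. law_Y Th D g (y i))))
        \<partial>sample_law D m)"

end

theory Submission
  imports Defs
begin

(*
  With theta uniform on a finite set, every entropy in the statement is an average over theta
  of the logarithm of a fibre size of the observation map theta |-> Y^n. So the chain rule,
  submodularity of entropy and Gibbs' inequality hold pointwise in the covariates.

  Put J n = H(Y^n | X^n). Then H(theta | Y^n, X^n) = H(theta) - J n,
  H(Y_{n+1} | Y^n, X^{n+1}) = J (n + 1) - J n and D(P_n || Q_n) = n H(Y) - J n. The
  increments of J are at most H(Y), and they are nonincreasing because the covariates are
  exchangeable. The hypothesis says that J reaches H(theta) up to o(H(theta)) by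
  (1 + eps) n*, where n* H(Y) ~ H(theta). As J grows by at most H(Y) per sample, this forces
  J n* = n* H(Y) - o(H(theta)), which is (1). For (2): by concavity, an increment of at most
  (1 - d) H(Y) at some n <= (1 - eps) n* would bound all later increments, and J could not
  reach H(theta) by (1 + eps') n* for small eps'.
*)

section \<open>Entropy of a function of a uniform random variable\<close>

definition fibre_card :: "'a set \<Rightarrow> ('a \<Rightarrow> 'b) \<Rightarrow> 'a \<Rightarrow> nat" where
  "fibre_card S f t = card {t'\<in>S. f t' = f t}"

(* The entropy of f(theta) for theta uniform on S: the value f t has probability
   fibre_card S f t / card S. *)
definition fibre_entropy :: "'a set \<Rightarrow> ('a \<Rightarrow> 'b) \<Rightarrow> real" where
  "fibre_entropy S f = (\<Sum>t\<in>S. ln (real (card S) / real (fibre_card S f t))) / real (card S)"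

lemma fibre_card_pos: "finite S \<Longrightarrow> t \<in> S \<Longrightarrow> 0 < fibre_card S f t"
  unfolding fibre_card_def by (auto simp: card_gt_0_iff)

lemma fibre_card_le_card: "finite S \<Longrightarrow> fibre_card S f t \<le> card S"
  unfolding fibre_card_def by (intro card_mono) auto

lemma fibre_card_cong:
  "(\<And>t'. t' \<in> S \<Longrightarrow> f t' = f t \<longleftrightarrow> f' t' = f' t) \<Longrightarrow> fibre_card S f t = fibre_card S f' t"
  unfolding fibre_card_def by (metis (mono_tags, lifting) Collect_cong)

lemma fibre_card_inj: "inj_on f S \<Longrightarrow> t \<in> S \<Longrightarrow> fibre_card S f t = 1"
proof -
  assume "inj_on f S" "t \<in> S"
  then have "{t'\<in>S. f t' = f t} = {t}" by (auto dest: inj_onD)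
  then show ?thesis unfolding fibre_card_def by simp
qed

lemma sum_image_eq_sum_fibre_card:
  assumes "finite S"
  shows "(\<Sum>y\<in>f`S. F y) = (\<Sum>t\<in>S. F (f t) / real (fibre_card S f t))"
proof -
  have "(\<Sum>t\<in>S. F (f t) / real (fibre_card S f t)) =
        (\<Sum>y\<in>f`S. \<Sum>t\<in>{t\<in>S. f t = y}. F y / real (card {t\<in>S. f t = y}))"
    unfolding fibre_card_def by (subst sum.image_gen[OF assms, of _ f]) (intro sum.cong refl; simp)
  also have "\<dots> = (\<Sum>y\<in>f`S. F y)"
    using assms by (intro sum.cong) (auto simp: card_gt_0_iff)
  finally show ?thesis ..
qed

lemma sum_card_filter_image:
  assumes "finite S"
  shows "(\<Sum>c\<in>u`S. card {t\<in>S. P t \<and> u t = c}) = card {t\<in>S. P t}"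
proof -
  have "card {t\<in>S. P t} = card (\<Union>c\<in>u`S. {t\<in>S. P t \<and> u t = c})"
    by (rule arg_cong[where f=card]) auto
  also have "\<dots> = (\<Sum>c\<in>u`S. card {t\<in>S. P t \<and> u t = c})"
    using assms by (intro card_UN_disjoint) auto
  finally show ?thesis ..
qed

lemma fibre_entropy_cong:
  assumes "\<And>t t'. t \<in> S \<Longrightarrow> t' \<in> S \<Longrightarrow> f t' = f t \<longleftrightarrow> f' t' = f' t"
  shows "fibre_entropy S f = fibre_entropy S f'"
proof -
  have "fibre_card S f t = fibre_card S f' t" if "t \<in> S" for t
    using assms that by (intro fibre_card_cong) auto
  then show ?thesis unfolding fibre_entropy_def by simp
qed

lemma fibre_entropy_inj: "inj_on f S \<Longrightarrow> fibre_entropy S f = ln (real (card S))"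
  by (cases "S = {}") (simp_all add: fibre_entropy_def fibre_card_inj)

lemma fibre_entropy_const: "fibre_entropy S (\<lambda>_. c) = 0"
  by (simp add: fibre_entropy_def fibre_card_def)

lemma fibre_entropy_nonneg: "0 \<le> fibre_entropy S f"
proof (cases "finite S")
  case True
  have "0 \<le> ln (real (card S) / real (fibre_card S f t))" if "t \<in> S" for t
    using fibre_card_pos[OF True that, of f] fibre_card_le_card[OF True, of f t] by simp
  then show ?thesis unfolding fibre_entropy_def by (intro divide_nonneg_nonneg sum_nonneg) auto
qed (simp add: fibre_entropy_def)

lemma fibre_entropy_le_ln_card: "fibre_entropy S f \<le> ln (real (card S))"
proof (cases "finite S \<and> S \<noteq> {}")
  case True
  then have "ln (real (card S) / real (fibre_card S f t)) \<le> ln (real (card S))" if "t \<in> S" for t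
    using fibre_card_pos[of S t f] that by (simp add: card_gt_0_iff ln_div)
  then have "(\<Sum>t\<in>S. ln (real (card S) / real (fibre_card S f t))) \<le> real (card S) * ln (real (card S))"
    using sum_bounded_above[of S "\<lambda>t. ln (real (card S) / real (fibre_card S f t))"] by simp
  then show ?thesis using True unfolding fibre_entropy_def by (simp add: divide_le_eq card_gt_0_iff mult.commute)
qed (auto simp: fibre_entropy_def)

lemma sum_fibre_card_ratio_le_card:
  fixes f :: "'a \<Rightarrow> 'b" and u :: "'a \<Rightarrow> 'c" and v :: "'a \<Rightarrow> 'd"
  assumes S: "finite S"
  shows "(\<Sum>t\<in>S. real (fibre_card S (\<lambda>t. (f t, u t)) t) * real (fibre_card S (\<lambda>t. (f t, v t)) t) /
           (real (fibre_card S f t) * real (fibre_card S (\<lambda>t. (f t, u t, v t)) t))) \<le> real (card S)"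
proof -
  define Nfu where "Nfu b c = real (card {t\<in>S. f t = b \<and> u t = c})" for b c
  define Nfv where "Nfv b d = real (card {t\<in>S. f t = b \<and> v t = d})" for b d
  define Nf where "Nf b = real (card {t\<in>S. f t = b})" for b
  define G where "G = (\<lambda>(b, c, d). Nfu b c * Nfv b d / Nf b)"
  have marginal_u: "(\<Sum>c\<in>u`S. Nfu b c) = Nf b" and marginal_v: "(\<Sum>d\<in>v`S. Nfv b d) = Nf b" for b
    unfolding Nfu_def Nfv_def Nf_def
    using sum_card_filter_image[OF S, where u=u and P="\<lambda>t. f t = b"]
      sum_card_filter_image[OF S, where u=v and P="\<lambda>t. f t = b"]
    by (simp_all flip: of_nat_sum)
  have "(\<Sum>t\<in>S. real (fibre_card S (\<lambda>t. (f t, u t)) t) * real (fibre_card S (\<lambda>t. (f t, v t)) t) /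
           (real (fibre_card S f t) * real (fibre_card S (\<lambda>t. (f t, u t, v t)) t)))
      = (\<Sum>y\<in>(\<lambda>t. (f t, u t, v t))`S. G y)"
    unfolding sum_image_eq_sum_fibre_card[OF S]
    by (intro sum.cong refl) (simp add: G_def Nfu_def Nfv_def Nf_def fibre_card_def)
  also have "\<dots> \<le> (\<Sum>y\<in>f`S \<times> u`S \<times> v`S. G y)"
    using S by (intro sum_mono2) (auto simp: G_def Nfu_def Nfv_def Nf_def)
  also have "\<dots> = (\<Sum>b\<in>f`S. \<Sum>c\<in>u`S. \<Sum>d\<in>v`S. Nfu b c * Nfv b d / Nf b)"
    unfolding G_def by (simp add: sum.cartesian_product)
  also have "\<dots> = (\<Sum>b\<in>f`S. (\<Sum>c\<in>u`S. Nfu b c) * (\<Sum>d\<in>v`S. Nfv b d) / Nf b)"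
    by (simp add: sum_divide_distrib sum_distrib_left sum_distrib_right) (intro sum.cong refl sum.swap)
  also have "\<dots> = (\<Sum>b\<in>f`S. Nf b)"
    unfolding marginal_u marginal_v using S by (intro sum.cong refl) (auto simp: Nf_def card_gt_0_iff)
  also have "\<dots> = real (card S)"
    unfolding Nf_def using sum_card_filter_image[OF S, where u=f and P="\<lambda>_. True"] by (simp flip: of_nat_sum)
  finally show ?thesis .
qed

(* Nonnegativity of the conditional mutual information I(u; v | f): by ln r <= r - 1 it
   reduces to the counting bound above. *)
lemma fibre_entropy_submodular:
  assumes S: "finite S"
  shows "fibre_entropy S (\<lambda>t. (f t, u t, v t)) + fibre_entropy S f
           \<le> fibre_entropy S (\<lambda>t. (f t, u t)) + fibre_entropy S (\<lambda>t. (f t, v t))"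
proof -
  let ?c = "\<lambda>h t. real (fibre_card S h t)"
  define r where "r t = ?c (\<lambda>t. (f t, u t)) t * ?c (\<lambda>t. (f t, v t)) t /
                        (?c f t * ?c (\<lambda>t. (f t, u t, v t)) t)" for t
  have ln_r: "ln (r t) = ln (real (card S) / ?c f t) + ln (real (card S) / ?c (\<lambda>t. (f t, u t, v t)) t)
      - ln (real (card S) / ?c (\<lambda>t. (f t, u t)) t) - ln (real (card S) / ?c (\<lambda>t. (f t, v t)) t)"
    if "t \<in> S" for t
    using that S card_gt_0_iff[of S] fibre_card_pos[OF S that, of f] fibre_card_pos[OF S that, of "\<lambda>t. (f t, u t)"]
      fibre_card_pos[OF S that, of "\<lambda>t. (f t, v t)"] fibre_card_pos[OF S that, of "\<lambda>t. (f t, u t, v t)"]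
    by (auto simp: r_def ln_div ln_mult)
  have "(\<Sum>t\<in>S. ln (r t)) \<le> (\<Sum>t\<in>S. r t - 1)"
    by (intro sum_mono ln_le_minus_one) (simp add: r_def fibre_card_pos S)
  also have "\<dots> \<le> 0"
    using sum_fibre_card_ratio_le_card[OF S, of f u v] by (simp add: sum_subtractf r_def)
  finally have "(\<Sum>t\<in>S. ln (r t)) \<le> 0" .
  then show ?thesis
    unfolding fibre_entropy_def add_divide_distrib[symmetric]
    by (simp add: ln_r sum.distrib sum_subtractf divide_right_mono)
qed

lemma fibre_entropy_pair_le_add:
  assumes S: "finite S"
  shows "fibre_entropy S (\<lambda>t. (u t, v t)) \<le> fibre_entropy S u + fibre_entropy S v"
proof -
  have "fibre_entropy S (\<lambda>t. ((), u t, v t)) + fibre_entropy S (\<lambda>_. ())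
          \<le> fibre_entropy S (\<lambda>t. ((), u t)) + fibre_entropy S (\<lambda>t. ((), v t))"
    by (rule fibre_entropy_submodular[OF S])
  moreover have "fibre_entropy S (\<lambda>t. ((), u t, v t)) = fibre_entropy S (\<lambda>t. (u t, v t))"
    "fibre_entropy S (\<lambda>t. ((), u t)) = fibre_entropy S u" "fibre_entropy S (\<lambda>t. ((), v t)) = fibre_entropy S v"
    by (auto intro: fibre_entropy_cong)
  ultimately show ?thesis by (simp add: fibre_entropy_const)
qed

lemma fibre_entropy_le_cross_entropy:
  assumes S: "finite S" and Q_pos: "\<And>t. t \<in> S \<Longrightarrow> 0 < Q (f t)" and Q_sum: "(\<Sum>y\<in>f`S. Q y) \<le> 1"
  shows "fibre_entropy S f \<le> - (\<Sum>t\<in>S. ln (Q (f t))) / real (card S)"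
proof (cases "S = {}")
  case False
  define M where "M = real (card S)"
  have M: "0 < M" using S False by (simp add: M_def card_gt_0_iff)
  have "ln (M / real (fibre_card S f t)) + ln (Q (f t)) = ln (Q (f t) * M / real (fibre_card S f t))"
    if "t \<in> S" for t
    using M Q_pos[OF that] that by (simp add: ln_div ln_mult fibre_card_pos S)
  then have "(\<Sum>t\<in>S. ln (M / real (fibre_card S f t)) + ln (Q (f t)))
      = (\<Sum>t\<in>S. ln (Q (f t) * M / real (fibre_card S f t)))"
    by simp
  also have "\<dots> \<le> (\<Sum>t\<in>S. Q (f t) * M / real (fibre_card S f t) - 1)"
    using M Q_pos by (intro sum_mono ln_le_minus_one) (simp add: fibre_card_pos S)
  also have "\<dots> = M * (\<Sum>y\<in>f`S. Q y) - M"
    by (simp add: sum_image_eq_sum_fibre_card[OF S] sum_subtractf sum_distrib_left M_def mult.commute)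
  also have "\<dots> \<le> 0"
    using M Q_sum by (simp add: mult_le_cancel_left1)
  finally have "(\<Sum>t\<in>S. ln (M / real (fibre_card S f t))) \<le> - (\<Sum>t\<in>S. ln (Q (f t)))"
    by (simp add: sum.distrib)
  then have "(\<Sum>t\<in>S. ln (M / real (fibre_card S f t))) / M \<le> - (\<Sum>t\<in>S. ln (Q (f t))) / M"
    using M by (intro divide_right_mono) auto
  then show ?thesis unfolding fibre_entropy_def M_def .
qed (simp add: fibre_entropy_def)

lemma pmf_map_pmf_of_set_fibre_card:
  "finite S \<Longrightarrow> S \<noteq> {} \<Longrightarrow>
     pmf (map_pmf f (pmf_of_set S)) (f t) = real (fibre_card S f t) / real (card S)"
  unfolding pmf_map by (simp add: measure_pmf_of_set fibre_card_def Int_def vimage_def)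

lemma sum_set_pmf_map_pmf_of_set:
  fixes f :: "'a \<Rightarrow> 'b"
  assumes S: "finite S" "S \<noteq> {}"
  defines "p \<equiv> map_pmf f (pmf_of_set S)"
  shows "(\<Sum>y\<in>set_pmf p. pmf p y * F (pmf p y) y)
           = (\<Sum>t\<in>S. F (real (fibre_card S f t) / real (card S)) (f t)) / real (card S)"
proof -
  have "(\<Sum>y\<in>set_pmf p. pmf p y * F (pmf p y) y)
      = (\<Sum>t\<in>S. real (fibre_card S f t) / real (card S) * F (real (fibre_card S f t) / real (card S)) (f t)
                 / real (fibre_card S f t))"
    using S unfolding p_def
    by (simp add: sum_image_eq_sum_fibre_card pmf_map_pmf_of_set_fibre_card)
  also have "\<dots> = (\<Sum>t\<in>S. F (real (fibre_card S f t) / real (card S)) (f t) / real (card S))"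
    using S by (intro sum.cong refl) (simp add: fibre_card_pos)
  finally show ?thesis by (simp add: sum_divide_distrib)
qed

lemma pmf_entropy_pmf_of_set:
  "finite S \<Longrightarrow> S \<noteq> {} \<Longrightarrow> pmf_entropy (pmf_of_set S) = ln (real (card S))"
  by (simp add: pmf_entropy_def ln_div)

lemma pmf_cond_entropy_map_pmf_of_set:
  assumes S: "finite S" "S \<noteq> {}"
  shows "pmf_cond_entropy (map_pmf (\<lambda>t. (A t, B t)) (pmf_of_set S))
           = fibre_entropy S (\<lambda>t. (A t, B t)) - fibre_entropy S B"
proof -
  define p where "p = map_pmf (\<lambda>t. (A t, B t)) (pmf_of_set S)"
  have "map_pmf snd p = map_pmf B (pmf_of_set S)"
    by (simp add: p_def pmf.map_comp o_def)
  then have marginal: "pmf (map_pmf snd p) (B t) = real (fibre_card S B t) / real (card S)" for t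
    by (simp add: pmf_map_pmf_of_set_fibre_card[OF S])
  have "pmf_cond_entropy p = - (\<Sum>t\<in>S. ln (real (fibre_card S (\<lambda>t. (A t, B t)) t) / real (card S)
                                   / pmf (map_pmf snd p) (B t))) / real (card S)"
    unfolding pmf_cond_entropy_def p_def
    by (subst sum_set_pmf_map_pmf_of_set[OF S, where
          F="\<lambda>q y. ln (q / pmf (map_pmf snd (map_pmf (\<lambda>t. (A t, B t)) (pmf_of_set S))) (snd y))"]) simp
  also have "\<dots> = (\<Sum>t\<in>S. ln (real (card S) / real (fibre_card S (\<lambda>t. (A t, B t)) t))
                          - ln (real (card S) / real (fibre_card S B t))) / real (card S)"
    unfolding marginal sum_negf[symmetric] minus_divide_left
    using S by (intro arg_cong[where f="\<lambda>s. s / real (card S)"] sum.cong refl)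
      (simp add: ln_div fibre_card_pos card_gt_0_iff)
  finally show ?thesis
    unfolding p_def fibre_entropy_def by (simp add: sum_subtractf diff_divide_distrib)
qed

lemma relative_entropy_map_pmf_of_set:
  assumes "finite S" "S \<noteq> {}"
  shows "(let p = map_pmf B (pmf_of_set S) in \<Sum>y\<in>set_pmf p. pmf p y * ln (pmf p y / Q y))
           = (\<Sum>t\<in>S. ln (real (fibre_card S B t) / real (card S) / Q (B t))) / real (card S)"
  unfolding Let_def by (rule sum_set_pmf_map_pmf_of_set[OF assms, where F="\<lambda>p y. ln (p / Q y)"])

lemma relative_entropy_map_pmf_of_set_cross_entropy:
  assumes S: "finite S" "S \<noteq> {}" and Q_pos: "\<And>t. t \<in> S \<Longrightarrow> 0 < Q (B t)"
  shows "(let p = map_pmf B (pmf_of_set S) in \<Sum>y\<in>set_pmf p. pmf p y * ln (pmf p y / Q y))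
           = - (\<Sum>t\<in>S. ln (Q (B t))) / real (card S) - fibre_entropy S B"
proof -
  have "ln (real (fibre_card S B t) / real (card S) / Q (B t))
          = - ln (Q (B t)) - ln (real (card S) / real (fibre_card S B t))" if "t \<in> S" for t
    using S Q_pos[OF that] that card_gt_0_iff[of S] by (simp add: ln_div ln_mult fibre_card_pos)
  then have "(\<Sum>t\<in>S. ln (real (fibre_card S B t) / real (card S) / Q (B t)))
      = - (\<Sum>t\<in>S. ln (Q (B t))) - (\<Sum>t\<in>S. ln (real (card S) / real (fibre_card S B t)))"
    by (simp add: sum_subtractf sum_negf)
  then show ?thesis
    unfolding relative_entropy_map_pmf_of_set[OF S] fibre_entropy_def by (simp add: diff_divide_distrib)
qed

lemma entropy_nonneg:
  fixes q :: "'y \<Rightarrow> real"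
  assumes "\<And>y. 0 \<le> q y" "\<And>y. q y \<le> 1"
  shows "0 \<le> - (\<Sum>y\<in>A. q y * ln (q y))"
proof -
  have "q y * ln (q y) \<le> 0" for y
    using assms[of y] by (cases "q y = 0") (auto intro!: mult_nonneg_nonpos)
  then show ?thesis by (simp add: sum_nonpos)
qed

lemma entropy_le_ln_card:
  fixes q :: "'y::finite \<Rightarrow> real"
  assumes q_nonneg: "\<And>y. 0 \<le> q y" and q_sum: "(\<Sum>y\<in>UNIV. q y) = 1"
  shows "- (\<Sum>y\<in>UNIV. q y * ln (q y)) \<le> ln (real CARD('y))"
proof -
  define K where "K = real CARD('y)"
  have K: "0 < K" by (simp add: K_def)
  have "- (q y * ln (q y)) \<le> q y * ln K + 1 / K - q y" for y
  proof (cases "q y = 0")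
    case False
    then have qy: "0 < q y" using q_nonneg[of y] by simp
    have "q y * ln (1 / (q y * K)) \<le> q y * (1 / (q y * K) - 1)"
      using qy K by (intro mult_left_mono ln_le_minus_one) simp_all
    moreover have "q y * ln (1 / (q y * K)) = - (q y * ln (q y)) - q y * ln K"
      using qy K by (simp add: ln_div ln_mult algebra_simps)
    moreover have "q y * (1 / (q y * K) - 1) = 1 / K - q y"
      using qy by (simp add: field_simps)
    ultimately show ?thesis by linarith
  qed (use K in simp)
  then have "- (\<Sum>y\<in>UNIV. q y * ln (q y)) \<le> (\<Sum>y\<in>UNIV. q y * ln K + 1 / K - q y)"
    by (simp add: sum_negf[symmetric] sum_mono)
  also have "\<dots> = ln K"
    using K by (simp add: sum.distrib sum_subtractf q_sum K_def flip: sum_distrib_right)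
  finally show ?thesis unfolding K_def .
qed

lemma pred_eq_count_space:
  fixes f g :: "'a \<Rightarrow> 'y::countable"
  shows "f \<in> M \<rightarrow>\<^sub>M count_space UNIV \<Longrightarrow> g \<in> M \<rightarrow>\<^sub>M count_space UNIV \<Longrightarrow> Measurable.pred M (\<lambda>x. f x = g x)"
  by measurable

lemma borel_measurable_fibre_card:
  assumes S: "finite S" and F: "\<And>t'. t' \<in> S \<Longrightarrow> Measurable.pred M (\<lambda>x. F x t' = F x t)"
  shows "(\<lambda>x. real (fibre_card S (F x) t)) \<in> borel_measurable M"
proof -
  have "real (fibre_card S (F x) t) = (\<Sum>t'\<in>S. if F x t' = F x t then 1 else 0)" for x
    using S by (simp add: fibre_card_def sum.If_cases Int_def conj_commute)
  then show ?thesis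
    using F by (simp only:) (intro borel_measurable_sum measurable_If; simp add: Measurable.pred_def)
qed

lemma borel_measurable_fibre_entropy:
  assumes "finite S" and "\<And>t t'. t \<in> S \<Longrightarrow> t' \<in> S \<Longrightarrow> Measurable.pred M (\<lambda>x. F x t' = F x t)"
  shows "(\<lambda>x. fibre_entropy S (F x)) \<in> borel_measurable M"
  unfolding fibre_entropy_def using assms
  by (intro borel_measurable_divide borel_measurable_sum borel_measurable_ln borel_measurable_fibre_card) auto

lemma (in prob_space) integrable_fibre_entropy:
  "(\<lambda>x. fibre_entropy S (F x)) \<in> borel_measurable M \<Longrightarrow> integrable M (\<lambda>x. fibre_entropy S (F x))"
  by (rule integrable_const_bound[where B="ln (real (card S))"])
    (simp_all add: fibre_entropy_nonneg fibre_entropy_le_ln_card)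

section \<open>The noiseless model with a uniform prior\<close>

lemma obs_eq_iff: "obs g x t' n = obs g x t n \<longleftrightarrow> (\<forall>i\<in>{..<n}. g (x i) t' = g (x i) t)"
  unfolding obs_def by (auto simp: fun_eq_iff restrict_def)

lemma obs_Suc_eq_iff:
  "obs g x t' (Suc n) = obs g x t (Suc n) \<longleftrightarrow> g (x n) t' = g (x n) t \<and> obs g x t' n = obs g x t n"
  by (auto simp: obs_eq_iff less_Suc_eq)

lemma obs_cong: "(\<And>i. i < n \<Longrightarrow> y i = x i) \<Longrightarrow> obs g y t n = obs g x t n"
  unfolding obs_def by (rule restrict_ext) simp

(* For i.i.d. covariates, skip_at x n has the law of X^{n+1}; this makes the increments of
   H(Y^n | X^n) nonincreasing. *)
definition skip_at :: "(nat \<Rightarrow> 'a) \<Rightarrow> nat \<Rightarrow> nat \<Rightarrow> 'a" where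
  "skip_at x n = (\<lambda>i\<in>{..<Suc n}. x (if i = n then Suc n else i))"

(* PX m is the law of X^m and q the law of Y; obs_entropy x n is H(Y^n | X^n = x),
   H_obs_given n is H(Y^n | X^n), and cross_entropy z = E_theta[- ln q (g z theta)]. *)
locale uniform_prior_model =
  fixes S :: "(nat \<Rightarrow> real) set" and D :: "(nat \<Rightarrow> real) measure"
    and g :: "(nat \<Rightarrow> real) \<Rightarrow> (nat \<Rightarrow> real) \<Rightarrow> 'y::finite"
  assumes finite_S: "finite S" and S_ne: "S \<noteq> {}" and prob_D: "prob_space D"
    and g_measurable: "\<And>t. t \<in> S \<Longrightarrow> (\<lambda>z. g z t) \<in> D \<rightarrow>\<^sub>M count_space UNIV"
begin

abbreviation PX :: "nat \<Rightarrow> (nat \<Rightarrow> nat \<Rightarrow> real) measure" where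
  "PX m \<equiv> sample_law D m"

abbreviation q :: "'y \<Rightarrow> real" where
  "q \<equiv> law_Y S D g"

definition obs_entropy :: "(nat \<Rightarrow> nat \<Rightarrow> real) \<Rightarrow> nat \<Rightarrow> real" where
  "obs_entropy x n = fibre_entropy S (\<lambda>t. obs g x t n)"

definition H_obs_given :: "nat \<Rightarrow> real" where
  "H_obs_given n = (\<integral>x. obs_entropy x n \<partial>PX n)"

definition cross_entropy :: "(nat \<Rightarrow> real) \<Rightarrow> real" where
  "cross_entropy z = - (\<Sum>t\<in>S. ln (q (g z t))) / real (card S)"

sublocale D: prob_space D by (rule prob_D)

lemma card_S_pos: "0 < real (card S)"
  using finite_S S_ne by (simp add: card_gt_0_iff)

lemma prob_space_sample_law: "prob_space (PX m)"
  unfolding sample_law_def using prob_D by (intro prob_space_PiM) auto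

lemma measurable_sample_law_component: "i < m \<Longrightarrow> (\<lambda>x. x i) \<in> PX m \<rightarrow>\<^sub>M D"
  unfolding sample_law_def by (rule measurable_component_singleton) simp

lemma measurable_g_component: "i < m \<Longrightarrow> t \<in> S \<Longrightarrow> (\<lambda>x. g (x i) t) \<in> PX m \<rightarrow>\<^sub>M count_space UNIV"
  by (rule measurable_compose[OF measurable_sample_law_component g_measurable])

lemma pred_obs_eq:
  "n \<le> m \<Longrightarrow> t \<in> S \<Longrightarrow> t' \<in> S \<Longrightarrow> Measurable.pred (PX m) (\<lambda>x. obs g x t' n = obs g x t n)"
  unfolding obs_eq_iff
  by (intro pred_intros_countable_bounded(3) pred_eq_count_space measurable_g_component) auto

lemma borel_measurable_obs_entropy: "n \<le> m \<Longrightarrow> (\<lambda>x. obs_entropy x n) \<in> borel_measurable (PX m)"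
  unfolding obs_entropy_def by (intro borel_measurable_fibre_entropy[OF finite_S] pred_obs_eq)

lemma integrable_obs_entropy: "n \<le> m \<Longrightarrow> integrable (PX m) (\<lambda>x. obs_entropy x n)"
  unfolding obs_entropy_def
  by (rule prob_space.integrable_fibre_entropy[OF prob_space_sample_law])
    (simp add: borel_measurable_obs_entropy[unfolded obs_entropy_def])

lemma measurable_sample_law_reindex:
  "\<sigma> \<in> {..<m} \<rightarrow> {..<k} \<Longrightarrow> (\<lambda>x. \<lambda>i\<in>{..<m}. x (\<sigma> i)) \<in> PX k \<rightarrow>\<^sub>M PX m"
  unfolding sample_law_def by (rule measurable_restrict) (auto intro!: measurable_component_singleton)

lemma integral_sample_law_reindex:
  fixes F :: "(nat \<Rightarrow> nat \<Rightarrow> real) \<Rightarrow> real"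
  assumes \<sigma>: "inj_on \<sigma> {..<m}" "\<sigma> \<in> {..<m} \<rightarrow> {..<k}" and F: "F \<in> borel_measurable (PX m)"
  shows "(\<integral>x. F (\<lambda>i\<in>{..<m}. x (\<sigma> i)) \<partial>PX k) = (\<integral>y. F y \<partial>PX m)"
proof -
  have "distr (PX k) (PX m) (\<lambda>x. \<lambda>i\<in>{..<m}. x (\<sigma> i)) = PX m"
    unfolding sample_law_def using distr_PiM_reindex[of "{..<k}" "\<lambda>_. D" \<sigma> "{..<m}"] prob_D \<sigma> by simp
  with measurable_sample_law_reindex[OF \<sigma>(2)] F show ?thesis
    using integral_distr[of "\<lambda>x. \<lambda>i\<in>{..<m}. x (\<sigma> i)" "PX k" "PX m" F] by simp
qed

lemma distr_sample_law_component: "i < m \<Longrightarrow> distr (PX m) D (\<lambda>x. x i) = D"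
  unfolding sample_law_def using distr_PiM_component[of "{..<m}" "\<lambda>_. D" i] prob_D by simp

lemma integral_sample_law_component:
  fixes F :: "(nat \<Rightarrow> real) \<Rightarrow> real"
  assumes "i < m" and F: "F \<in> borel_measurable D"
  shows "(\<integral>x. F (x i) \<partial>PX m) = (\<integral>z. F z \<partial>D)"
  using integral_distr[OF measurable_sample_law_component[OF assms(1)] F] distr_sample_law_component[OF assms(1)]
  by simp

lemma integrable_sample_law_component:
  fixes F :: "(nat \<Rightarrow> real) \<Rightarrow> real"
  assumes "i < m" "integrable D F"
  shows "integrable (PX m) (\<lambda>x. F (x i))"
  using integrable_distr_eq[OF measurable_sample_law_component[OF assms(1)] borel_measurable_integrable[OF assms(2)]]
    distr_sample_law_component[OF assms(1)] assms(2)
  by simp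

lemma integral_obs_entropy_marginal:
  assumes "n \<le> m"
  shows "(\<integral>x. obs_entropy x n \<partial>PX m) = H_obs_given n"
proof -
  have "obs_entropy (\<lambda>i\<in>{..<n}. x i) n = obs_entropy x n" for x
    unfolding obs_entropy_def using obs_cong[of n "\<lambda>i\<in>{..<n}. x i" x g] by simp
  moreover have "(\<integral>x. obs_entropy (\<lambda>i\<in>{..<n}. x i) n \<partial>PX m) = H_obs_given n"
    unfolding H_obs_given_def
    by (rule integral_sample_law_reindex[where \<sigma>="\<lambda>i. i"]) (use assms in \<open>auto intro: borel_measurable_obs_entropy\<close>)
  ultimately show ?thesis by simp
qed

lemma integrable_g_image:
  fixes F :: "'y \<Rightarrow> real"
  assumes "t \<in> S"
  shows "integrable D (\<lambda>z. F (g z t))"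
proof (rule D.integrable_const_bound[where B="\<Sum>y\<in>UNIV. \<bar>F y\<bar>"])
  show "AE z in D. norm (F (g z t)) \<le> (\<Sum>y\<in>UNIV. \<bar>F y\<bar>)"
    by (intro AE_I2) (auto intro: member_le_sum)
  show "(\<lambda>z. F (g z t)) \<in> borel_measurable D"
    by (rule measurable_compose[OF g_measurable[OF assms]]) simp
qed

lemma integral_g_image:
  fixes F :: "'y \<Rightarrow> real"
  assumes t: "t \<in> S"
  shows "(\<integral>z. F (g z t) \<partial>D) = (\<Sum>y\<in>UNIV. measure D {z\<in>space D. g z t = y} * F y)"
proof -
  have level_set: "{z\<in>space D. g z t = y} \<in> sets D" for y
    using pred_count_space_const1[OF g_measurable[OF t]] by (simp add: Measurable.pred_def)
  have "(\<integral>z. F (g z t) \<partial>D) = (\<integral>z. (\<Sum>y\<in>UNIV. indicator {z\<in>space D. g z t = y} z * F y) \<partial>D)"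
    by (intro Bochner_Integration.integral_cong refl)
      (simp add: indicator_def if_distrib[of "\<lambda>c. c * _"] sum.If_cases)
  also have "\<dots> = (\<Sum>y\<in>UNIV. measure D {z\<in>space D. g z t = y} * F y)"
    using level_set by (subst Bochner_Integration.integral_sum) (auto simp: D.emeasure_finite less_top[symmetric])
  finally show ?thesis .
qed

lemma q_nonneg: "0 \<le> q y"
  unfolding law_Y_def by (intro divide_nonneg_nonneg sum_nonneg) auto

lemma sum_q: "(\<Sum>y\<in>UNIV. q y) = 1"
proof -
  have "(\<Sum>y\<in>UNIV. measure D {z\<in>space D. g z t = y}) = 1" if "t \<in> S" for t
    using integral_g_image[OF that, of "\<lambda>_. 1"] D.prob_space by simp
  then have "(\<Sum>t\<in>S. \<Sum>y\<in>UNIV. measure D {z\<in>space D. g z t = y}) = real (card S)"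
    by simp
  then show ?thesis
    unfolding law_Y_def using card_S_pos by (simp add: sum_divide_distrib[symmetric] sum.swap[of _ S])
qed

lemma H_Y_nonneg: "0 \<le> H_Y S D g"
  unfolding H_Y_def using q_nonneg sum_q member_le_sum[of _ UNIV q]
  by (intro entropy_nonneg) auto

lemma H_Y_le_ln_card: "H_Y S D g \<le> ln (real CARD('y))"
  unfolding H_Y_def using q_nonneg sum_q by (rule entropy_le_ln_card)

(* Needed because ln 0 = 0: the identities involving ln q hold only where q > 0. *)
lemma AE_q_pos: "AE z in D. \<forall>t\<in>S. 0 < q (g z t)"
proof (rule AE_finite_allI[OF finite_S])
  fix t assume t: "t \<in> S"
  have "AE z in D. g z t \<noteq> y" if "q y = 0" for y
  proof -
    have "(\<Sum>t\<in>S. measure D {z\<in>space D. g z t = y}) = 0"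
      using that card_S_pos unfolding law_Y_def by simp
    then have "measure D {z\<in>space D. g z t = y} = 0"
      using t finite_S by (subst (asm) sum_nonneg_eq_0_iff) auto
    then show ?thesis
      using pred_count_space_const1[OF g_measurable[OF t], of y]
      by (intro AE_I'[of "{z\<in>space D. g z t = y}"] null_setsI)
        (auto simp: D.emeasure_eq_measure Measurable.pred_def)
  qed
  then have "AE z in D. \<forall>y\<in>UNIV. q y = 0 \<longrightarrow> g z t \<noteq> y"
    by (intro AE_finite_allI) auto
  then show "AE z in D. 0 < q (g z t)"
    by eventually_elim (use q_nonneg in \<open>force simp: less_eq_real_def\<close>)
qed

lemma AE_sample_law_q_pos: "AE x in PX m. \<forall>i\<in>{..<m}. \<forall>t\<in>S. 0 < q (g (x i) t)"
proof (rule AE_finite_allI)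
  fix i assume "i \<in> {..<m}"
  then show "AE x in PX m. \<forall>t\<in>S. 0 < q (g (x i) t)"
    unfolding sample_law_def using AE_q_pos prob_D
    by (intro AE_PiM_component[where P="\<lambda>z. \<forall>t\<in>S. 0 < q (g z t)"]) auto
qed simp

lemma integrable_cross_entropy: "integrable D cross_entropy"
  unfolding cross_entropy_def[abs_def]
  by (intro integrable_divide_zero integrable_minus Bochner_Integration.integrable_sum integrable_g_image)

lemma integral_cross_entropy: "(\<integral>z. cross_entropy z \<partial>D) = H_Y S D g"
proof -
  have "(\<integral>z. cross_entropy z \<partial>D) = - (\<Sum>t\<in>S. \<integral>z. ln (q (g z t)) \<partial>D) / real (card S)"
    unfolding cross_entropy_def by (simp add: integrable_g_image[of _ "\<lambda>y. ln (q y)"])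
  also have "(\<Sum>t\<in>S. \<integral>z. ln (q (g z t)) \<partial>D)
      = (\<Sum>t\<in>S. \<Sum>y\<in>UNIV. measure D {z\<in>space D. g z t = y} * ln (q y))"
    by (intro sum.cong refl integral_g_image[where F="\<lambda>y. ln (q y)"])
  also have "\<dots> = (\<Sum>y\<in>UNIV. (\<Sum>t\<in>S. measure D {z\<in>space D. g z t = y}) * ln (q y))"
    by (simp add: sum.swap[of _ S] sum_distrib_right)
  also have "\<dots> = real (card S) * (\<Sum>y\<in>UNIV. q y * ln (q y))"
    unfolding law_Y_def using card_S_pos by (simp add: sum_distrib_left)
  finally show ?thesis
    unfolding H_Y_def using card_S_pos by simp
qed

lemma obs_entropy_Suc: "obs_entropy x (Suc n) = fibre_entropy S (\<lambda>t. (g (x n) t, obs g x t n))"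
  unfolding obs_entropy_def by (rule fibre_entropy_cong) (simp add: obs_Suc_eq_iff)

lemma H_theta_eq: "H_theta S = ln (real (card S))"
  unfolding H_theta_def by (rule pmf_entropy_pmf_of_set[OF finite_S S_ne])

lemma H_theta_given_eq: "H_theta_given S D g n = ln (real (card S)) - H_obs_given n"
proof -
  interpret PX: prob_space "PX n" by (rule prob_space_sample_law)
  have "pmf_cond_entropy (map_pmf (\<lambda>\<theta>. (\<theta>, obs g x \<theta> n)) (pmf_of_set S))
          = ln (real (card S)) - obs_entropy x n" for x
    unfolding pmf_cond_entropy_map_pmf_of_set[OF finite_S S_ne] obs_entropy_def
    by (simp add: fibre_entropy_inj inj_on_def)
  then show ?thesis
    unfolding H_theta_given_def H_obs_given_def using integrable_obs_entropy[of n n]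
    by (simp add: PX.prob_space)
qed

lemma H_next_given_eq: "H_next_given S D g n = H_obs_given (Suc n) - H_obs_given n"
proof -
  have "pmf_cond_entropy (map_pmf (\<lambda>\<theta>. (g (x n) \<theta>, obs g x \<theta> n)) (pmf_of_set S))
          = obs_entropy x (Suc n) - obs_entropy x n" for x
    unfolding pmf_cond_entropy_map_pmf_of_set[OF finite_S S_ne] obs_entropy_Suc
    by (simp add: obs_entropy_def)
  then show ?thesis
    unfolding H_next_given_def using integrable_obs_entropy[of _ "Suc n"]
    by (simp add: integral_obs_entropy_marginal)
qed

lemma H_obs_given_0: "H_obs_given 0 = 0"
  by (simp add: H_obs_given_def obs_entropy_def obs_def restrict_def fibre_entropy_const)

lemma H_obs_given_le_ln_card: "H_obs_given n \<le> ln (real (card S))"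
  unfolding H_obs_given_def obs_entropy_def
  by (intro prob_space.integral_le_const[OF prob_space_sample_law] integrable_obs_entropy[of n n, unfolded obs_entropy_def])
    (simp_all add: fibre_entropy_le_ln_card)

lemma borel_measurable_fibre_entropy_g: "(\<lambda>z. fibre_entropy S (\<lambda>t. g z t)) \<in> borel_measurable D"
  using finite_S g_measurable by (intro borel_measurable_fibre_entropy pred_eq_count_space) auto

lemma integrable_fibre_entropy_g_component:
  "i < m \<Longrightarrow> integrable (PX m) (\<lambda>x. fibre_entropy S (\<lambda>t. g (x i) t))"
  by (intro prob_space.integrable_fibre_entropy[OF prob_space_sample_law]
      measurable_compose[OF measurable_sample_law_component borel_measurable_fibre_entropy_g])

lemma integral_fibre_entropy_g_le_H_Y: "(\<integral>z. fibre_entropy S (\<lambda>t. g z t) \<partial>D) \<le> H_Y S D g"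
proof -
  have "(\<integral>z. fibre_entropy S (\<lambda>t. g z t) \<partial>D) \<le> (\<integral>z. cross_entropy z \<partial>D)"
  proof (rule integral_mono_AE)
    show "integrable D (\<lambda>z. fibre_entropy S (\<lambda>t. g z t))"
      by (rule D.integrable_fibre_entropy[OF borel_measurable_fibre_entropy_g])
    show "AE z in D. fibre_entropy S (\<lambda>t. g z t) \<le> cross_entropy z"
      using AE_q_pos
    proof eventually_elim
      case (elim z)
      have "(\<Sum>y\<in>(\<lambda>t. g z t)`S. q y) \<le> (\<Sum>y\<in>UNIV. q y)"
        using q_nonneg by (intro sum_mono2) auto
      then show ?case
        unfolding cross_entropy_def using elim sum_q finite_S
        by (intro fibre_entropy_le_cross_entropy) auto
    qed
  qed (rule integrable_cross_entropy)
  then show ?thesis unfolding integral_cross_entropy .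
qed

lemma H_obs_given_Suc_le: "H_obs_given (Suc n) \<le> H_obs_given n + H_Y S D g"
proof -
  have "H_obs_given (Suc n) \<le> (\<integral>x. obs_entropy x n + fibre_entropy S (\<lambda>t. g (x n) t) \<partial>PX (Suc n))"
    unfolding H_obs_given_def
  proof (rule integral_mono)
    show "obs_entropy x (Suc n) \<le> obs_entropy x n + fibre_entropy S (\<lambda>t. g (x n) t)" for x
      using obs_entropy_Suc[of x n] fibre_entropy_pair_le_add[OF finite_S, of "\<lambda>t. g (x n) t" "\<lambda>t. obs g x t n"]
      by (simp add: obs_entropy_def add.commute)
  qed (simp_all add: integrable_obs_entropy integrable_fibre_entropy_g_component)
  also have "\<dots> = H_obs_given n + (\<integral>z. fibre_entropy S (\<lambda>t. g z t) \<partial>D)"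
    using integrable_obs_entropy[of n "Suc n"] integrable_fibre_entropy_g_component[of n "Suc n"]
    by (simp add: integral_obs_entropy_marginal
        integral_sample_law_component[OF _ borel_measurable_fibre_entropy_g])
  also have "\<dots> \<le> H_obs_given n + H_Y S D g"
    using integral_fibre_entropy_g_le_H_Y by simp
  finally show ?thesis .
qed

lemma obs_entropy_submodular:
  "obs_entropy x (Suc (Suc n)) + obs_entropy x n \<le> obs_entropy x (Suc n) + obs_entropy (skip_at x n) (Suc n)"
proof -
  have "obs g (skip_at x n) t n = obs g x t n" for t
    by (rule obs_cong) (simp add: skip_at_def)
  then have "obs_entropy (skip_at x n) (Suc n) = fibre_entropy S (\<lambda>t. (obs g x t n, g (x (Suc n)) t))"
    unfolding obs_entropy_Suc by (intro fibre_entropy_cong) (auto simp: skip_at_def)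
  moreover have "obs_entropy x (Suc n) = fibre_entropy S (\<lambda>t. (obs g x t n, g (x n) t))"
    unfolding obs_entropy_Suc by (intro fibre_entropy_cong) auto
  moreover have "obs_entropy x (Suc (Suc n)) = fibre_entropy S (\<lambda>t. (obs g x t n, g (x (Suc n)) t, g (x n) t))"
    unfolding obs_entropy_def by (intro fibre_entropy_cong) (auto simp: obs_Suc_eq_iff)
  ultimately show ?thesis
    using fibre_entropy_submodular[OF finite_S, of "\<lambda>t. obs g x t n" "\<lambda>t. g (x (Suc n)) t" "\<lambda>t. g (x n) t"]
    by (simp add: obs_entropy_def)
qed

lemma integrable_obs_entropy_skip_at:
  "integrable (PX (Suc (Suc n))) (\<lambda>x. obs_entropy (skip_at x n) (Suc n))"
  and integral_obs_entropy_skip_at: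
  "(\<integral>x. obs_entropy (skip_at x n) (Suc n) \<partial>PX (Suc (Suc n))) = H_obs_given (Suc n)"
proof -
  define \<sigma> where "\<sigma> i = (if i = n then Suc n else i)" for i
  have \<sigma>: "inj_on \<sigma> {..<Suc n}" "\<sigma> \<in> {..<Suc n} \<rightarrow> {..<Suc (Suc n)}"
    by (auto simp: \<sigma>_def inj_on_def)
  have skip: "skip_at x n = (\<lambda>i\<in>{..<Suc n}. x (\<sigma> i))" for x :: "nat \<Rightarrow> nat \<Rightarrow> real"
    by (simp add: skip_at_def \<sigma>_def)
  show "integrable (PX (Suc (Suc n))) (\<lambda>x. obs_entropy (skip_at x n) (Suc n))"
    unfolding skip obs_entropy_def
    by (intro prob_space.integrable_fibre_entropy[OF prob_space_sample_law] measurable_compose[OF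
          measurable_sample_law_reindex[OF \<sigma>(2)] borel_measurable_obs_entropy[unfolded obs_entropy_def]]) simp
  show "(\<integral>x. obs_entropy (skip_at x n) (Suc n) \<partial>PX (Suc (Suc n))) = H_obs_given (Suc n)"
    unfolding skip H_obs_given_def by (intro integral_sample_law_reindex[OF \<sigma>] borel_measurable_obs_entropy) simp
qed

lemma H_obs_given_concave:
  "H_obs_given (Suc (Suc n)) - H_obs_given (Suc n) \<le> H_obs_given (Suc n) - H_obs_given n"
proof -
  have "H_obs_given (Suc (Suc n)) + H_obs_given n
      = (\<integral>x. obs_entropy x (Suc (Suc n)) + obs_entropy x n \<partial>PX (Suc (Suc n)))"
    using integrable_obs_entropy by (simp add: integral_obs_entropy_marginal)
  also have "\<dots> \<le> (\<integral>x. obs_entropy x (Suc n) + obs_entropy (skip_at x n) (Suc n) \<partial>PX (Suc (Suc n)))"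
    using obs_entropy_submodular integrable_obs_entropy integrable_obs_entropy_skip_at
    by (intro integral_mono) auto
  also have "\<dots> = H_obs_given (Suc n) + H_obs_given (Suc n)"
    using integrable_obs_entropy integrable_obs_entropy_skip_at
    by (simp add: integral_obs_entropy_marginal integral_obs_entropy_skip_at)
  finally show ?thesis by simp
qed

definition kl_given :: "(nat \<Rightarrow> nat \<Rightarrow> real) \<Rightarrow> nat \<Rightarrow> real" where
  "kl_given x m = (\<Sum>t\<in>S. ln (real (fibre_card S (\<lambda>t. obs g x t m) t) / real (card S)
                               / (\<Prod>i<m. q (g (x i) t)))) / real (card S)"

lemma KL_PQ_eq_integral_kl_given: "KL_PQ S D g m = (\<integral>x. kl_given x m \<partial>PX m)"
proof -
  have "(\<Prod>i<m. q (obs g x t m i)) = (\<Prod>i<m. q (g (x i) t))" for x t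
    by (intro prod.cong refl) (simp add: obs_def)
  then show ?thesis
    unfolding KL_PQ_def relative_entropy_map_pmf_of_set[OF finite_S S_ne] kl_given_def by simp
qed

lemma borel_measurable_kl_given: "(\<lambda>x. kl_given x m) \<in> borel_measurable (PX m)"
  unfolding kl_given_def using finite_S
  by (intro borel_measurable_divide borel_measurable_sum borel_measurable_ln borel_measurable_prod
      borel_measurable_fibre_card pred_obs_eq borel_measurable_const
      measurable_compose[OF measurable_g_component]) auto

lemma kl_given_eq:
  assumes pos: "\<forall>i\<in>{..<m}. \<forall>t\<in>S. 0 < q (g (x i) t)"
  shows "kl_given x m = (\<Sum>i<m. cross_entropy (x i)) - obs_entropy x m"
proof -
  have "ln (\<Prod>i<m. q (g (x i) t)) = (\<Sum>i<m. ln (q (g (x i) t)))" if "t \<in> S" for t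
    using pos that by (intro ln_prod) force+
  moreover have "kl_given x m = - (\<Sum>t\<in>S. ln (\<Prod>i<m. q (g (x i) t))) / real (card S) - obs_entropy x m"
    using relative_entropy_map_pmf_of_set_cross_entropy[OF finite_S S_ne, where B="\<lambda>t. obs g x t m"
        and Q="\<lambda>y. \<Prod>i<m. q (y i)"] pos
    unfolding relative_entropy_map_pmf_of_set[OF finite_S S_ne] kl_given_def obs_entropy_def
    by (auto simp: obs_def intro!: prod_pos)
  ultimately show ?thesis
    unfolding cross_entropy_def by (simp add: sum.swap[of _ S] sum_divide_distrib sum_negf)
qed

lemma KL_PQ_eq: "KL_PQ S D g m = real m * H_Y S D g - H_obs_given m"
proof -
  have cross_entropy_component: "integrable (PX m) (\<lambda>x. cross_entropy (x i))" if "i < m" for i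
    using that by (rule integrable_sample_law_component[OF _ integrable_cross_entropy])
  then have cross_entropy_sum: "integrable (PX m) (\<lambda>x. \<Sum>i<m. cross_entropy (x i))"
    by (intro Bochner_Integration.integrable_sum) auto
  have "KL_PQ S D g m = (\<integral>x. (\<Sum>i<m. cross_entropy (x i)) - obs_entropy x m \<partial>PX m)"
    unfolding KL_PQ_eq_integral_kl_given
  proof (rule integral_cong_AE)
    show "(\<lambda>x. (\<Sum>i<m. cross_entropy (x i)) - obs_entropy x m) \<in> borel_measurable (PX m)"
      using cross_entropy_component borel_measurable_obs_entropy by (intro borel_measurable_diff) auto
    show "AE x in PX m. kl_given x m = (\<Sum>i<m. cross_entropy (x i)) - obs_entropy x m"
      using AE_sample_law_q_pos by eventually_elim (rule kl_given_eq)
  qed (rule borel_measurable_kl_given)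
  also have "\<dots> = (\<Sum>i<m. \<integral>x. cross_entropy (x i) \<partial>PX m) - H_obs_given m"
    using cross_entropy_component unfolding H_obs_given_def
    by (simp add: Bochner_Integration.integral_diff[OF cross_entropy_sum integrable_obs_entropy[of m m]]
        Bochner_Integration.integral_sum)
  also have "\<dots> = real m * H_Y S D g - H_obs_given m"
    using integral_sample_law_component[OF _ borel_measurable_integrable[OF integrable_cross_entropy]]
    by (simp add: integral_cross_entropy)
  finally show ?thesis .
qed

end

section \<open>Concave information profiles\<close>

lemma le_add_mult_of_increment_le:
  fixes j :: "nat \<Rightarrow> real"
  assumes "\<And>k. j (Suc k) \<le> j k + c"
  shows "j (m + d) \<le> j m + real d * c"
proof (induction d)
  case (Suc d)
  then show ?case using assms[of "m + d"] by (simp add: algebra_simps)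
qed simp

lemma le_tangent_of_decreasing_increments:
  fixes j :: "nat \<Rightarrow> real"
  assumes "\<And>k. j (Suc (Suc k)) - j (Suc k) \<le> j (Suc k) - j k"
  shows "j (n + d) \<le> j n + real d * (j (Suc n) - j n)"
proof -
  have "decseq (\<lambda>k. j (Suc k) - j k)"
    using assms by (intro decseq_SucI) simp
  then have "j (Suc (n + d)) - j (n + d) \<le> j (Suc n) - j n" for d
    by (simp add: decseq_def)
  then show ?thesis
    by (induction d) (simp_all add: algebra_simps, smt (verit))
qed

lemma increment_ratio_lower_bound:
  fixes a h n_star n K r \<delta> \<epsilon> :: real
  assumes "0 < h" "0 < \<epsilon>" "0 < n_star" "0 \<le> \<delta>" "0 \<le> r"
    and n: "n \<le> (1 - \<epsilon>) * n_star" and K: "(1 + \<delta>) * n_star \<le> K" "K \<le> (1 + \<delta>) * n_star + 1"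
    and a: "n_star * (1 - r) * h - n * h \<le> (K - n) * a"
  shows "1 - (\<delta> + r + 1 / n_star) / \<epsilon> \<le> a / h"
proof -
  define D where "D = K - n"
  have "0 \<le> \<delta> * n_star" "0 \<le> r * n_star" using assms by simp_all
  then have D: "\<epsilon> * n_star \<le> D" and excess: "0 \<le> K - n_star + r * n_star"
    using n K(1) unfolding D_def by (simp_all add: algebra_simps)
  have D_pos: "0 < D" using D \<open>0 < \<epsilon>\<close> \<open>0 < n_star\<close> by (smt (verit) mult_pos_pos)
  have "(n_star * (1 - r) - n) * h \<le> D * a" using a unfolding D_def by (simp add: algebra_simps)
  then have "(n_star * (1 - r) - n) / D \<le> a / h"
    using D_pos \<open>0 < h\<close> by (simp add: divide_le_eq le_divide_eq mult.commute)
  moreover have "D - (n_star * (1 - r) - n) = K - n_star + r * n_star"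
    by (simp add: D_def algebra_simps)
  then have "1 - (n_star * (1 - r) - n) / D = (K - n_star + r * n_star) / D"
    using D_pos by (metis diff_divide_distrib divide_self less_irrefl)
  moreover have "(K - n_star + r * n_star) / D \<le> (K - n_star + r * n_star) / (\<epsilon> * n_star)"
    using excess D D_pos \<open>0 < \<epsilon>\<close> \<open>0 < n_star\<close> by (intro divide_left_mono) simp_all
  moreover have "K - n_star + r * n_star \<le> (\<delta> + r + 1 / n_star) * n_star"
    using K(2) \<open>0 < n_star\<close> by (simp add: algebra_simps)
  then have "(K - n_star + r * n_star) / (\<epsilon> * n_star) \<le> (\<delta> + r + 1 / n_star) / \<epsilon>"
    using \<open>0 < \<epsilon>\<close> \<open>0 < n_star\<close> by (simp add: divide_le_eq mult.assoc)
  ultimately show ?thesis by linarith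
qed

(* Along the sequence of models, H N = H(theta), h N = H(Y) <= C, J N n = H(Y^n | X^n) and
   n_star N = n*; recovery is the hypothesis of the theorem. *)
locale information_profile =
  fixes H h :: "nat \<Rightarrow> real" and J :: "nat \<Rightarrow> nat \<Rightarrow> real" and n_star :: "nat \<Rightarrow> nat" and C :: real
  assumes n_star_eq: "\<And>N. n_star N = nat \<lfloor>H N / h N\<rfloor>"
    and H_at_top: "filterlim H at_top sequentially"
    and h_bounds: "eventually (\<lambda>N. 0 \<le> h N \<and> h N \<le> C) sequentially"
    and J_0: "eventually (\<lambda>N. J N 0 = 0) sequentially"
    and J_increment_le: "eventually (\<lambda>N. \<forall>k. J N (Suc k) \<le> J N k + h N) sequentially"
    and J_concave: "eventually (\<lambda>N. \<forall>k. J N (Suc (Suc k)) - J N (Suc k) \<le> J N (Suc k) - J N k) sequentially"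
    and J_le_H: "eventually (\<lambda>N. \<forall>k. J N k \<le> H N) sequentially"
    and recovery: "\<And>\<epsilon> n. \<epsilon> > 0 \<Longrightarrow> (\<And>N. (1 + \<epsilon>) * real (n_star N) \<le> real (n N)) \<Longrightarrow>
                     ((\<lambda>N. (H N - J N (n N)) / H N) \<longlongrightarrow> 0) sequentially"
begin

lemma eventually_H_pos: "eventually (\<lambda>N. 0 < H N) sequentially"
  using H_at_top by (simp add: filterlim_at_top_dense)

(* If h N = 0 then n_star N = 0, and recovery at n = 2 n_star = 0 would make H N - J N 0 = H N
   small compared with H N. *)
lemma eventually_h_pos: "eventually (\<lambda>N. 0 < h N) sequentially"
proof -
  have "((\<lambda>N. (H N - J N (2 * n_star N)) / H N) \<longlongrightarrow> 0) sequentially"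
    by (rule recovery[of 1]) simp_all
  then have "eventually (\<lambda>N. (H N - J N (2 * n_star N)) / H N < 1) sequentially"
    by (rule order_tendstoD) simp
  with h_bounds J_0 eventually_H_pos show ?thesis
  proof eventually_elim
    case (elim N)
    show "0 < h N"
    proof (rule ccontr)
      assume "\<not> 0 < h N"
      then have "h N = 0" using elim by auto
      then have "n_star N = 0" by (simp add: n_star_eq)
      then show False using elim by simp
    qed
  qed
qed

lemma eventually_n_star_bounds:
  "eventually (\<lambda>N. real (n_star N) * h N \<le> H N \<and> H N < (real (n_star N) + 1) * h N) sequentially"
  using eventually_h_pos eventually_H_pos
proof eventually_elim
  case (elim N)
  have "0 \<le> H N / h N" using elim by simp
  then have "real (n_star N) \<le> H N / h N" "H N / h N < real (n_star N) + 1"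
    unfolding n_star_eq by linarith+
  then show ?case using elim by (simp add: field_simps)
qed

lemma n_star_at_top: "filterlim (\<lambda>N. real (n_star N)) at_top sequentially"
  unfolding filterlim_at_top
proof
  fix Z :: real
  from H_at_top have "eventually (\<lambda>N. (Z + 1) * C \<le> H N) sequentially"
    by (simp add: filterlim_at_top)
  then show "eventually (\<lambda>N. Z \<le> real (n_star N)) sequentially"
    using eventually_n_star_bounds eventually_h_pos h_bounds
  proof eventually_elim
    case (elim N)
    have "H N < (real (n_star N) + 1) * C"
      using elim by (smt (verit) mult_left_mono of_nat_0_le_iff)
    then have "(Z + 1) * C < (real (n_star N) + 1) * C" using elim(1) by linarith
    then show ?case using elim by (simp add: mult_less_cancel_right)
  qed
qed

lemma h_over_H_tendsto_0: "((\<lambda>N. h N / H N) \<longlongrightarrow> 0) sequentially"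
proof (rule tendsto_sandwich[where f="\<lambda>_. 0" and h="\<lambda>N. C / H N"])
  show "eventually (\<lambda>N. 0 \<le> h N / H N) sequentially" "eventually (\<lambda>N. h N / H N \<le> C / H N) sequentially"
    using h_bounds eventually_H_pos by (eventually_elim, simp add: divide_right_mono)+
  show "((\<lambda>N. C / H N) \<longlongrightarrow> 0) sequentially"
    by (rule tendsto_divide_0[OF tendsto_const filterlim_at_top_imp_at_infinity[OF H_at_top]])
qed simp

definition inflated_size :: "real \<Rightarrow> nat \<Rightarrow> nat" where
  "inflated_size \<delta> N = nat \<lceil>(1 + \<delta>) * real (n_star N)\<rceil>"

lemma inflated_size_bounds:
  assumes "0 \<le> \<delta>"
  shows "(1 + \<delta>) * real (n_star N) \<le> real (inflated_size \<delta> N)"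
    and "real (inflated_size \<delta> N) \<le> (1 + \<delta>) * real (n_star N) + 1"
proof -
  have "0 \<le> (1 + \<delta>) * real (n_star N)" using assms by simp
  then show "(1 + \<delta>) * real (n_star N) \<le> real (inflated_size \<delta> N)"
    and "real (inflated_size \<delta> N) \<le> (1 + \<delta>) * real (n_star N) + 1"
    unfolding inflated_size_def by linarith+
qed

lemma eventually_recovered_at_inflated_size:
  assumes "0 < \<delta>" "0 < e"
  shows "eventually (\<lambda>N. (H N - J N (inflated_size \<delta> N)) / H N < e) sequentially"
proof -
  have "((\<lambda>N. (H N - J N (inflated_size \<delta> N)) / H N) \<longlongrightarrow> 0) sequentially"
    using assms by (intro recovery[of \<delta>] inflated_size_bounds) auto
  then show ?thesis using assms(2) by (rule order_tendstoD)
qed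

lemma excess_lower_bound:
  "eventually (\<lambda>N. - (h N / H N) \<le> (real (n_star N) * h N - J N (n_star N)) / H N) sequentially"
  using eventually_n_star_bounds J_le_H eventually_H_pos
proof eventually_elim
  case (elim N)
  then have "J N (n_star N) \<le> H N" by blast
  then have "- h N \<le> real (n_star N) * h N - J N (n_star N)" using elim(1) by (simp add: algebra_simps)
  then have "- h N / H N \<le> (real (n_star N) * h N - J N (n_star N)) / H N"
    using elim(3) by (intro divide_right_mono) auto
  then show ?case by simp
qed

lemma excess_upper_bound:
  assumes \<delta>: "0 < \<delta>"
  shows "eventually (\<lambda>N. (real (n_star N) * h N - J N (n_star N)) / H N
           \<le> (H N - J N (inflated_size \<delta> N)) / H N + \<delta> + h N / H N) sequentially"
  using eventually_n_star_bounds eventually_H_pos h_bounds J_increment_le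
proof eventually_elim
  case (elim N)
  define K where "K = inflated_size \<delta> N"
  have "0 \<le> \<delta> * real (n_star N)" "(1 + \<delta>) * real (n_star N) = real (n_star N) + \<delta> * real (n_star N)"
    using \<delta> by (simp_all add: algebra_simps)
  then have K: "real (n_star N) \<le> real K" "real K - real (n_star N) \<le> \<delta> * real (n_star N) + 1"
    using inflated_size_bounds[of \<delta> N] \<delta> unfolding K_def by linarith+
  have "J N K \<le> J N (n_star N) + real (K - n_star N) * h N"
    using le_add_mult_of_increment_le[of "J N" "h N" "n_star N" "K - n_star N"] K elim(4) by simp
  moreover have "real (K - n_star N) * h N \<le> \<delta> * H N + h N"
  proof -
    have "real (K - n_star N) * h N \<le> (\<delta> * real (n_star N) + 1) * h N"
      using K elim(3) by (intro mult_right_mono) (simp_all add: of_nat_diff)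
    also have "\<dots> \<le> \<delta> * H N + h N"
      using elim(1) \<delta> by (simp add: algebra_simps mult_left_mono)
    finally show ?thesis .
  qed
  ultimately have "real (n_star N) * h N - J N (n_star N) \<le> (H N - J N K) + \<delta> * H N + h N"
    using elim(1) by linarith
  then have "(real (n_star N) * h N - J N (n_star N)) / H N \<le> ((H N - J N K) + \<delta> * H N + h N) / H N"
    using elim(2) by (intro divide_right_mono) auto
  also have "\<dots> = (H N - J N K) / H N + \<delta> + h N / H N"
    using elim(2) by (simp add: add_divide_distrib)
  finally show ?case unfolding K_def .
qed

lemma excess_tendsto_0: "((\<lambda>N. (real (n_star N) * h N - J N (n_star N)) / H N) \<longlongrightarrow> 0) sequentially"
proof (rule order_tendstoI)
  fix e :: real assume "e < 0"
  then have "eventually (\<lambda>N. e < - (h N / H N)) sequentially"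
    using tendsto_minus[OF h_over_H_tendsto_0] by (intro order_tendstoD) auto
  with excess_lower_bound
  show "eventually (\<lambda>N. e < (real (n_star N) * h N - J N (n_star N)) / H N) sequentially"
    by eventually_elim simp
next
  fix e :: real assume "0 < e"
  then have \<delta>: "0 < e / 3" by simp
  have "eventually (\<lambda>N. h N / H N < e / 3) sequentially"
    using h_over_H_tendsto_0 \<delta> by (rule order_tendstoD)
  with eventually_recovered_at_inflated_size[OF \<delta> \<delta>] excess_upper_bound[OF \<delta>]
  show "eventually (\<lambda>N. (real (n_star N) * h N - J N (n_star N)) / H N < e) sequentially"
    by eventually_elim linarith
qed

lemma increment_lower_bound:
  assumes \<epsilon>: "0 < \<epsilon>" and n_le: "\<And>N. real (n N) \<le> (1 - \<epsilon>) * real (n_star N)" and \<delta>: "0 < \<delta>"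
  shows "eventually (\<lambda>N. 1 - (\<delta> + (H N - J N (inflated_size \<delta> N)) / H N + 1 / real (n_star N)) / \<epsilon>
                          \<le> (J N (Suc (n N)) - J N (n N)) / h N) sequentially"
proof -
  have "eventually (\<lambda>N. 0 < real (n_star N)) sequentially"
    using n_star_at_top unfolding filterlim_at_top_dense by blast
  with eventually_recovered_at_inflated_size[OF \<delta> zero_less_one] show ?thesis
    using eventually_n_star_bounds eventually_H_pos eventually_h_pos J_0 J_increment_le J_concave J_le_H
  proof eventually_elim
    case (elim N)
    define K where "K = inflated_size \<delta> N"
    define r where "r = (H N - J N K) / H N"
    have K: "(1 + \<delta>) * real (n_star N) \<le> real K" "real K \<le> (1 + \<delta>) * real (n_star N) + 1"
      using inflated_size_bounds[of \<delta> N] \<delta> unfolding K_def by simp_all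
    have "real (n N) \<le> real K"
      using n_le[of N] K(1) \<delta> \<epsilon> elim(2) by (smt (verit) mult_right_mono)
    then have "J N K \<le> J N (n N) + real (K - n N) * (J N (Suc (n N)) - J N (n N))"
      using le_tangent_of_decreasing_increments[of "J N" "n N" "K - n N"] elim(8) by simp
    moreover have "J N (n N) \<le> real (n N) * h N"
      using le_add_mult_of_increment_le[of "J N" "h N" 0 "n N"] elim(6,7) by simp
    moreover have r: "0 \<le> r" "r < 1"
      using elim(1,4,9) unfolding r_def K_def by simp_all
    then have "real (n_star N) * (1 - r) * h N \<le> J N K"
      using mult_right_mono[of "real (n_star N) * h N" "H N" "1 - r"] elim(3,4)
      by (simp add: r_def field_simps)
    ultimately have "real (n_star N) * (1 - r) * h N - real (n N) * h N
        \<le> (real K - real (n N)) * (J N (Suc (n N)) - J N (n N))"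
      using \<open>real (n N) \<le> real K\<close> by (simp add: of_nat_diff)
    then show ?case
      using increment_ratio_lower_bound[OF elim(5) \<epsilon> elim(2) _ r(1) n_le K] \<delta>
      unfolding r_def K_def by simp
  qed
qed

lemma increment_tendsto_1:
  assumes \<epsilon>: "0 < \<epsilon>" and n_le: "\<And>N. real (n N) \<le> (1 - \<epsilon>) * real (n_star N)"
  shows "((\<lambda>N. (J N (Suc (n N)) - J N (n N)) / h N) \<longlongrightarrow> 1) sequentially"
proof (rule order_tendstoI)
  fix e :: real assume "1 < e"
  show "eventually (\<lambda>N. (J N (Suc (n N)) - J N (n N)) / h N < e) sequentially"
    using J_increment_le eventually_h_pos
  proof eventually_elim
    case (elim N)
    then have "J N (Suc (n N)) - J N (n N) \<le> h N" by (simp add: algebra_simps)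
    then have "(J N (Suc (n N)) - J N (n N)) / h N \<le> 1" using elim(2) by (simp add: divide_le_eq)
    then show ?case using \<open>1 < e\<close> by linarith
  qed
next
  fix e :: real assume "e < 1"
  define \<delta> where "\<delta> = \<epsilon> * (1 - e) / 3"
  have \<delta>: "0 < \<delta>" using \<epsilon> \<open>e < 1\<close> by (simp add: \<delta>_def)
  have "eventually (\<lambda>N. 1 / \<delta> < real (n_star N)) sequentially"
    using n_star_at_top by (simp add: filterlim_at_top_dense)
  with eventually_recovered_at_inflated_size[OF \<delta> \<delta>] increment_lower_bound[OF \<epsilon> n_le \<delta>]
  show "eventually (\<lambda>N. e < (J N (Suc (n N)) - J N (n N)) / h N) sequentially"
  proof eventually_elim
    case (elim N)
    have "0 < 1 / \<delta>" using \<delta> by simp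
    then have "0 < real (n_star N)" using elim(3) by linarith
    then have "1 / real (n_star N) < \<delta>"
      using elim(3) \<delta> by (simp add: divide_less_eq mult.commute)
    then have "\<delta> + (H N - J N (inflated_size \<delta> N)) / H N + 1 / real (n_star N) < \<epsilon> * (1 - e)"
      using elim(1) unfolding \<delta>_def by linarith
    then have "(\<delta> + (H N - J N (inflated_size \<delta> N)) / H N + 1 / real (n_star N)) / \<epsilon> < 1 - e"
      using \<epsilon> by (simp add: divide_less_eq mult.commute)
    then show ?case using elim(2) by linarith
  qed
qed

end

lemma uniform_prior_models_information_profile:
  fixes S :: "nat \<Rightarrow> (nat \<Rightarrow> real) set" and D :: "nat \<Rightarrow> (nat \<Rightarrow> real) measure"
    and g :: "nat \<Rightarrow> (nat \<Rightarrow> real) \<Rightarrow> (nat \<Rightarrow> real) \<Rightarrow> 'y::finite"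
  assumes models: "eventually (\<lambda>N. uniform_prior_model (S N) (D N) (g N)) sequentially"
    and card_at_top: "filterlim (\<lambda>N. card (S N)) at_top sequentially"
    and recovery: "\<forall>(\<epsilon>::real) (n::nat \<Rightarrow> nat). \<epsilon> > 0 \<longrightarrow>
               (\<forall>N. real (n N) \<ge> (1 + \<epsilon>) * real (nstar (S N) (D N) (g N))) \<longrightarrow>
               ((\<lambda>N. H_theta_given (S N) (D N) (g N) (n N) / H_theta (S N)) \<longlongrightarrow> 0) sequentially"
  shows "information_profile (\<lambda>N. H_theta (S N)) (\<lambda>N. H_Y (S N) (D N) (g N))
           (\<lambda>N. uniform_prior_model.H_obs_given (S N) (D N) (g N)) (\<lambda>N. nstar (S N) (D N) (g N))
           (ln (real CARD('y)))"
proof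
  show "nstar (S N) (D N) (g N) = nat \<lfloor>H_theta (S N) / H_Y (S N) (D N) (g N)\<rfloor>" for N
    by (simp add: nstar_def)
  have "eventually (\<lambda>N. ln (real (card (S N))) = H_theta (S N)) sequentially"
    using models by eventually_elim (simp add: uniform_prior_model.H_theta_eq)
  with filterlim_compose[OF ln_at_top filterlim_compose[OF filterlim_real_sequentially card_at_top]]
  show "filterlim (\<lambda>N. H_theta (S N)) at_top sequentially"
    by (simp add: filterlim_cong[OF refl refl])
  show "eventually (\<lambda>N. 0 \<le> H_Y (S N) (D N) (g N) \<and> H_Y (S N) (D N) (g N) \<le> ln (real CARD('y))) sequentially"
    using models by eventually_elim (simp add: uniform_prior_model.H_Y_nonneg uniform_prior_model.H_Y_le_ln_card)
  show "eventually (\<lambda>N. uniform_prior_model.H_obs_given (S N) (D N) (g N) 0 = 0) sequentially"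
    using models by eventually_elim (rule uniform_prior_model.H_obs_given_0)
  show "eventually (\<lambda>N. \<forall>k. uniform_prior_model.H_obs_given (S N) (D N) (g N) (Suc k)
          \<le> uniform_prior_model.H_obs_given (S N) (D N) (g N) k + H_Y (S N) (D N) (g N)) sequentially"
    using models by eventually_elim (simp add: uniform_prior_model.H_obs_given_Suc_le)
  show "eventually (\<lambda>N. \<forall>k. uniform_prior_model.H_obs_given (S N) (D N) (g N) (Suc (Suc k))
          - uniform_prior_model.H_obs_given (S N) (D N) (g N) (Suc k)
          \<le> uniform_prior_model.H_obs_given (S N) (D N) (g N) (Suc k)
          - uniform_prior_model.H_obs_given (S N) (D N) (g N) k) sequentially"
    using models by eventually_elim (simp add: uniform_prior_model.H_obs_given_concave)
  show "eventually (\<lambda>N. \<forall>k. uniform_prior_model.H_obs_given (S N) (D N) (g N) k \<le> H_theta (S N)) sequentially"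
    using models by eventually_elim
      (simp add: uniform_prior_model.H_obs_given_le_ln_card uniform_prior_model.H_theta_eq)
  fix \<epsilon> :: real and n :: "nat \<Rightarrow> nat"
  assume "0 < \<epsilon>" "\<And>N. (1 + \<epsilon>) * real (nstar (S N) (D N) (g N)) \<le> real (n N)"
  then have "((\<lambda>N. H_theta_given (S N) (D N) (g N) (n N) / H_theta (S N)) \<longlongrightarrow> 0) sequentially"
    using recovery by blast
  moreover have "eventually (\<lambda>N. H_theta_given (S N) (D N) (g N) (n N) / H_theta (S N)
      = (H_theta (S N) - uniform_prior_model.H_obs_given (S N) (D N) (g N) (n N)) / H_theta (S N)) sequentially"
    using models by eventually_elim (simp add: uniform_prior_model.H_theta_given_eq uniform_prior_model.H_theta_eq)
  ultimately show "((\<lambda>N. (H_theta (S N) - uniform_prior_model.H_obs_given (S N) (D N) (g N) (n N))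
      / H_theta (S N)) \<longlongrightarrow> 0) sequentially"
    by (rule Lim_transform_eventually)
qed

theorem lemma3:
  fixes Th :: "nat \<Rightarrow> (nat \<Rightarrow> real) set"
    and L :: "nat \<Rightarrow> nat"
    and D :: "nat \<Rightarrow> (nat \<Rightarrow> real) measure"
    and g :: "nat \<Rightarrow> (nat \<Rightarrow> real) \<Rightarrow> (nat \<Rightarrow> real) \<Rightarrow> 'y::finite"
  assumes fin: "\<And>N. finite (Th N)"
    and sphere: "\<And>N \<theta>. N \<ge> 1 \<Longrightarrow> \<theta> \<in> Th N \<Longrightarrow>
                    \<theta> \<in> {..<N} \<rightarrow>\<^sub>E (UNIV :: real set) \<and> (\<Sum>i<N. (\<theta> i)\<^sup>2) = 1"
    and nonneg_inner: "\<And>N \<theta> \<theta>'. \<theta> \<in> Th N \<Longrightarrow> \<theta>' \<in> Th N \<Longrightarrow> (\<Sum>i<N. \<theta> i * \<theta>' i) \<ge> 0"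
    and M_infty: "filterlim (\<lambda>N. card (Th N)) at_top sequentially"
    and probD: "\<And>N. prob_space (D N)"
    and setsD: "\<And>N. sets (D N) = sets (PiM {..<L N} (\<lambda>_. (lborel :: real measure)))"
    and g_meas: "\<And>N \<theta>. \<theta> \<in> Th N \<Longrightarrow> (\<lambda>x. g N x \<theta>) \<in> measurable (D N) (count_space UNIV)"
    and hyp: "\<forall>(\<epsilon>::real) (n::nat \<Rightarrow> nat). \<epsilon> > 0 \<longrightarrow>
               (\<forall>N. real (n N) \<ge> (1 + \<epsilon>) * real (nstar (Th N) (D N) (g N))) \<longrightarrow>
               ((\<lambda>N. H_theta_given (Th N) (D N) (g N) (n N) / H_theta (Th N)) \<longlongrightarrow> 0) sequentially"
  shows "((\<lambda>N. KL_PQ (Th N) (D N) (g N) (nstar (Th N) (D N) (g N)) / H_theta (Th N))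
            \<longlongrightarrow> 0) sequentially
         \<and> (\<forall>(\<epsilon>::real) (n::nat \<Rightarrow> nat). \<epsilon> > 0 \<longrightarrow>
               (\<forall>N. real (n N) \<le> (1 - \<epsilon>) * real (nstar (Th N) (D N) (g N))) \<longrightarrow>
               ((\<lambda>N. H_next_given (Th N) (D N) (g N) (n N) / H_Y (Th N) (D N) (g N))
                  \<longlongrightarrow> 1) sequentially)"
proof -
  have "eventually (\<lambda>N. 1 \<le> card (Th N)) sequentially"
    using M_infty by (simp add: filterlim_at_top)
  then have models: "eventually (\<lambda>N. uniform_prior_model (Th N) (D N) (g N)) sequentially"
    by eventually_elim (auto intro!: uniform_prior_model.intro fin probD g_meas)
  interpret information_profile "\<lambda>N. H_theta (Th N)" "\<lambda>N. H_Y (Th N) (D N) (g N)"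
    "\<lambda>N. uniform_prior_model.H_obs_given (Th N) (D N) (g N)" "\<lambda>N. nstar (Th N) (D N) (g N)"
    "ln (real CARD('y))"
    by (rule uniform_prior_models_information_profile[OF models M_infty hyp])
  have "eventually (\<lambda>N. (real (nstar (Th N) (D N) (g N)) * H_Y (Th N) (D N) (g N)
      - uniform_prior_model.H_obs_given (Th N) (D N) (g N) (nstar (Th N) (D N) (g N))) / H_theta (Th N)
      = KL_PQ (Th N) (D N) (g N) (nstar (Th N) (D N) (g N)) / H_theta (Th N)) sequentially"
    using models by eventually_elim (simp add: uniform_prior_model.KL_PQ_eq)
  with excess_tendsto_0 have "((\<lambda>N. KL_PQ (Th N) (D N) (g N) (nstar (Th N) (D N) (g N))
      / H_theta (Th N)) \<longlongrightarrow> 0) sequentially"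
    by (rule Lim_transform_eventually)
  moreover have "((\<lambda>N. H_next_given (Th N) (D N) (g N) (n N) / H_Y (Th N) (D N) (g N)) \<longlongrightarrow> 1) sequentially"
    if "0 < \<epsilon>" "\<forall>N. real (n N) \<le> (1 - \<epsilon>) * real (nstar (Th N) (D N) (g N))" for \<epsilon> :: real and n
  proof -
    have "eventually (\<lambda>N. (uniform_prior_model.H_obs_given (Th N) (D N) (g N) (Suc (n N))
        - uniform_prior_model.H_obs_given (Th N) (D N) (g N) (n N)) / H_Y (Th N) (D N) (g N)
        = H_next_given (Th N) (D N) (g N) (n N) / H_Y (Th N) (D N) (g N)) sequentially"
      using models by eventually_elim (simp add: uniform_prior_model.H_next_given_eq)
    with increment_tendsto_1[of \<epsilon> n] that show ?thesis by (blast intro: Lim_transform_eventually)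
  qed
  ultimately show ?thesis by blast
qed

end
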